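(* Let $R$ be a ring and let $a\in R$ be such that for some integer $n\geq 2$ the element $a^n$ is regular, i.e., $a^n=a^nba^n$ for some $b\in R$. Then there exists an idempotent $e\in aRa$ such that $(a(1-e))^n=0$; that is, $a$ is a D-regularly nil clean element of index at most $n$.
   Context: All rings are associative with identity $1\neq 0$. An element $a\in R$ is called D-regularly nil clean of index at most $k$ if there is an idempotent $e\in aRa$ with $(a(1-e))^k=0$. *)

theory Defs
  imports Main
begin

definition D_regularly_nil_clean_index :: "'a::ring_1 \<Rightarrow> nat \<Rightarrow> bool" where
  "D_regularly_nil_clean_index a k \<longleftrightarrow>
     (\<exists>e. (\<exists>r. e = a * r * a) \<and> e * e = e \<and> (a * (1 - e)) ^ k = 0)"

end

theory Submission
  imports Defs
begin

text \<open>Replace the inner inverse b of a^n by the reflexive inverse c = b a^n b, and put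
f = a^n c. Then e = a^(n-1) c a is an idempotent in aRa with a(1 - e) = (1 - f) a.
Since (1 - f) a^n = 0, the element (1 - f) a is absorbed on the right by 1 - f, so
((1 - f) a)^n = (1 - f) a^n = 0.\<close>

lemma reflexive_inverse_from_inner_inverse:
  fixes x b :: "'a::semigroup_mult"
  assumes "x * b * x = x"
  shows "x * (b * x * b) * x = x" and "(b * x * b) * x * (b * x * b) = b * x * b"
proof -
  have "x * (b * x * b) * x = (x * b * x) * b * x"
    by (simp only: mult.assoc)
  then show "x * (b * x * b) * x = x"
    using assms by simp
  have "(b * x * b) * x * (b * x * b) = b * (x * b * x) * (b * x) * b"
    by (simp only: mult.assoc)
  also have "\<dots> = b * (x * b * x) * b"
    using assms by (simp only: mult.assoc)
  finally show "(b * x * b) * x * (b * x * b) = b * x * b"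
    using assms by simp
qed

lemma idempotent_conjugate_reflexive_inverse:
  fixes a c :: "'a::monoid_mult"
  assumes "c * a ^ Suc m * c = c"
  shows "(a ^ m * c * a) * (a ^ m * c * a) = a ^ m * c * a"
proof -
  have "(a ^ m * c * a) * (a ^ m * c * a) = a ^ m * (c * a ^ Suc m * c) * a"
    by (simp only: power_Suc mult.assoc)
  then show ?thesis
    using assms by simp
qed

lemma power_mult_absorbing_left:
  fixes p a :: "'a::monoid_mult"
  assumes "p * a * p = p * a"
  shows "(p * a) ^ Suc m = p * a ^ Suc m"
proof (induction m)
  case 0
  then show ?case by simp
next
  case (Suc m)
  have "(p * a) ^ Suc (Suc m) = (p * a) * (p * a ^ Suc m)"
    by (subst power_Suc) (simp only: Suc)
  also have "\<dots> = (p * a * p) * a ^ Suc m"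
    by (simp only: mult.assoc)
  also have "\<dots> = p * a * a ^ Suc m"
    by (simp only: assms)
  also have "\<dots> = p * a ^ Suc (Suc m)"
    by (simp only: power_Suc mult.assoc)
  finally show ?case .
qed

lemma complement_absorbs_left:
  fixes a c :: "'a::ring_1"
  assumes "a ^ n * c * a ^ n = a ^ n"
  shows "(1 - a ^ n * c) * a ^ n = 0"
    and "(1 - a ^ n * c) * a * (1 - a ^ n * c) = (1 - a ^ n * c) * a"
proof -
  show annihilates: "(1 - a ^ n * c) * a ^ n = 0"
    using assms by (simp add: algebra_simps)
  have "(1 - a ^ n * c) * a * (a ^ n * c) = (1 - a ^ n * c) * a ^ n * a * c"
    by (simp only: mult.assoc power_commutes)
  then have "(1 - a ^ n * c) * a * (a ^ n * c) = 0"
    using annihilates by simp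
  then show "(1 - a ^ n * c) * a * (1 - a ^ n * c) = (1 - a ^ n * c) * a"
    by (simp add: right_diff_distrib)
qed

theorem proposition2p5:
  fixes a b :: "'a::ring_1" and n :: nat
  assumes "n \<ge> 2"
    and "a ^ n = a ^ n * b * a ^ n"
  shows "(\<exists>e. (\<exists>r. e = a * r * a) \<and> e * e = e \<and> (a * (1 - e)) ^ n = 0)
         \<and> D_regularly_nil_clean_index a n"
proof -
  obtain k where n: "n = Suc (Suc k)"
    using assms(1) by (metis add_2_eq_Suc le_Suc_ex)
  define c where "c = b * a ^ n * b"
  define e where "e = a ^ Suc k * c * a"
  have inner: "a ^ n * c * a ^ n = a ^ n" and reflexive: "c * a ^ n * c = c"
    using reflexive_inverse_from_inner_inverse assms(2) unfolding c_def by metis+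
  have "e = a * (a ^ k * c) * a"
    by (simp add: e_def mult.assoc)
  moreover have "e * e = e"
    using idempotent_conjugate_reflexive_inverse reflexive unfolding e_def n by blast
  moreover have "(a * (1 - e)) ^ n = 0"
  proof -
    have "a * (1 - e) = (1 - a ^ n * c) * a"
      by (simp add: e_def n algebra_simps mult.assoc)
    then have "(a * (1 - e)) ^ n = (1 - a ^ n * c) * a ^ n"
      using power_mult_absorbing_left complement_absorbs_left(2)[OF inner] n by metis
    then show ?thesis
      using complement_absorbs_left(1)[OF inner] by simp
  qed
  ultimately show ?thesis
    unfolding D_regularly_nil_clean_index_def by blast
qed

end
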